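(* Let $\mathcal{X}=({\bm X},m^{\bm X}_\bullet,\nu^{\bm X})$, $\mathcal{Y}=({\bm Y},m^{\bm Y}_\bullet,\nu^{\bm Y})$ be Markov chains on finite state spaces, $C:{\bm X}\times{\bm Y}\to\mathbb{R}_+$ a cost matrix, $\delta\in(0,1]$ and $k\in\mathbb{N}\cup\{\infty\}$. Then $\lim_{\epsilon\to0}d^{\delta,(k)}_{\mathrm{WL},\epsilon}(\mathcal{X},\mathcal{Y};C)=d^{\delta,(k)}_{\mathrm{WL}}(\mathcal{X},\mathcal{Y};C)$.
   Context: For $\alpha\in\mathcal{P}({\bm X}),\beta\in\mathcal{P}({\bm Y})$, cost $D$ and $\epsilon\ge0$, the entropy-regularized OT cost is $d^{\epsilon}_{\mathrm W}(\alpha,\beta;D)=\min_{P\in\mathcal{C}(\alpha,\beta)}\sum_{i,j}P_{ij}D_{ij}+\epsilon\sum_{i,j}P_{ij}\log P_{ij}$, where $\mathcal{C}(\alpha,\beta)$ is the set of couplings (matrices with marginals $\alpha,\beta$); $d_{\mathrm W}=d^0_{\mathrm W}$ is the usual OT cost. Define $C^{\epsilon,\delta,(0)}=C$ and $C^{\epsilon,\delta,(l)}_{ij}=\delta C_{ij}+(1-\delta)d^\epsilon_{\mathrm W}(m^{\bm X}_i,m^{\bm Y}_j;C^{\epsilon,\delta,(l-1)})$; set $d^{\delta,(k)}_{\mathrm{WL},\epsilon}(\mathcal{X},\mathcal{Y};C)=d^\epsilon_{\mathrm W}(\nu^{\bm X},\nu^{\bm Y};C^{\epsilon,\delta,(k)})$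 for $k\in\mathbb{N}$ and $d^{\delta,(\infty)}_{\mathrm{WL},\epsilon}=\lim_{k\to\infty}d^{\delta,(k)}_{\mathrm{WL},\epsilon}$ (this limit exists for $\delta>0$). A Markovian coupling between $\mathcal{X}$ and $\mathcal{Y}$ is a (possibly time-inhomogeneous) Markov chain $(X_t,Y_t)_{t\in\mathbb{N}}$ on ${\bm X}\times{\bm Y}$ with $\mathrm{law}(X_0,Y_0)\in\mathcal{C}(\nu^{\bm X},\nu^{\bm Y})$ and conditional law of $(X_{t+1},Y_{t+1})$ given $(X_t,Y_t)=(x,y)$ in $\mathcal{C}(m^{\bm X}_x,m^{\bm Y}_y)$ for all $t,x,y$; $\Pi$ is their set. $d^{\delta,(k)}_{\mathrm{WL}}=\inf_{\Pi}\mathbb{E}\big[\sum_{t=0}^{k-1}\delta(1-\delta)^tC(X_t,Y_t)+(1-\delta)^kC(X_k,Y_k)\big]$ for finite $k$ and $d^{\delta,(\infty)}_{\mathrm{WL}}=\inf_{\Pi}\mathbb{E}\big[\sum_{t\ge0}\delta(1-\delta)^tC(X_t,Y_t)\big]$. *)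

theory Defs
  imports "HOL-Analysis.Analysis" "HOL-Library.Extended_Nat"
begin

definition prob_vec :: "('a::finite \<Rightarrow> real) \<Rightarrow> bool" where
  "prob_vec \<alpha> \<longleftrightarrow> (\<forall>i. 0 \<le> \<alpha> i) \<and> (\<Sum>i\<in>UNIV. \<alpha> i) = 1"

definition markov_kernel :: "('a::finite \<Rightarrow> 'a \<Rightarrow> real) \<Rightarrow> bool" where
  "markov_kernel m \<longleftrightarrow> (\<forall>x. prob_vec (m x))"

definition coupling :: "('a::finite \<Rightarrow> real) \<Rightarrow> ('b::finite \<Rightarrow> real) \<Rightarrow> ('a \<Rightarrow> 'b \<Rightarrow> real) set" where
  "coupling \<alpha> \<beta> = {P. (\<forall>i j. 0 \<le> P i j) \<and> (\<forall>i. (\<Sum>j\<in>UNIV. P i j) = \<alpha> i)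
                        \<and> (\<forall>j. (\<Sum>i\<in>UNIV. P i j) = \<beta> j)}"

text \<open>Entropy-regularized OT cost (the minimum; it is attained, so it equals the infimum).
  Convention 0 log 0 = 0 holds automatically since 0 * ln 0 = 0.\<close>
definition ot_eps :: "real \<Rightarrow> ('a::finite \<Rightarrow> real) \<Rightarrow> ('b::finite \<Rightarrow> real) \<Rightarrow> ('a \<Rightarrow> 'b \<Rightarrow> real) \<Rightarrow> real" where
  "ot_eps \<epsilon> \<alpha> \<beta> D = Inf ((\<lambda>P. (\<Sum>i\<in>UNIV. \<Sum>j\<in>UNIV. P i j * D i j)
        + \<epsilon> * (\<Sum>i\<in>UNIV. \<Sum>j\<in>UNIV. P i j * ln (P i j))) ` coupling \<alpha> \<beta>)"

fun wl_cost :: "real \<Rightarrow> real \<Rightarrow> ('a::finite \<Rightarrow> 'a \<Rightarrow> real) \<Rightarrow> ('b::finite \<Rightarrow> 'b \<Rightarrow> real)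
    \<Rightarrow> ('a \<Rightarrow> 'b \<Rightarrow> real) \<Rightarrow> nat \<Rightarrow> 'a \<Rightarrow> 'b \<Rightarrow> real" where
  "wl_cost \<epsilon> \<delta> mX mY C 0 = C"
| "wl_cost \<epsilon> \<delta> mX mY C (Suc l) =
     (\<lambda>i j. \<delta> * C i j + (1 - \<delta>) * ot_eps \<epsilon> (mX i) (mY j) (wl_cost \<epsilon> \<delta> mX mY C l))"

definition dWL_eps_fin :: "real \<Rightarrow> real \<Rightarrow> ('a::finite \<Rightarrow> 'a \<Rightarrow> real) \<Rightarrow> ('a \<Rightarrow> real)
    \<Rightarrow> ('b::finite \<Rightarrow> 'b \<Rightarrow> real) \<Rightarrow> ('b \<Rightarrow> real) \<Rightarrow> ('a \<Rightarrow> 'b \<Rightarrow> real) \<Rightarrow> nat \<Rightarrow> real" where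
  "dWL_eps_fin \<epsilon> \<delta> mX \<nu>X mY \<nu>Y C k = ot_eps \<epsilon> \<nu>X \<nu>Y (wl_cost \<epsilon> \<delta> mX mY C k)"

definition dWL_eps :: "real \<Rightarrow> real \<Rightarrow> ('a::finite \<Rightarrow> 'a \<Rightarrow> real) \<Rightarrow> ('a \<Rightarrow> real)
    \<Rightarrow> ('b::finite \<Rightarrow> 'b \<Rightarrow> real) \<Rightarrow> ('b \<Rightarrow> real) \<Rightarrow> ('a \<Rightarrow> 'b \<Rightarrow> real) \<Rightarrow> enat \<Rightarrow> real" where
  "dWL_eps \<epsilon> \<delta> mX \<nu>X mY \<nu>Y C k =
     (case k of enat n \<Rightarrow> dWL_eps_fin \<epsilon> \<delta> mX \<nu>X mY \<nu>Y C n
              | \<infinity> \<Rightarrow> lim (\<lambda>n. dWL_eps_fin \<epsilon> \<delta> mX \<nu>X mY \<nu>Y C n))"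

text \<open>A (possibly time-inhomogeneous) Markov chain on X \<times> Y is given by its initial law pi
  and its transition kernels K t (x,y) (a distribution on X \<times> Y).\<close>
definition markov_coupling :: "('a::finite \<Rightarrow> 'a \<Rightarrow> real) \<Rightarrow> ('a \<Rightarrow> real)
    \<Rightarrow> ('b::finite \<Rightarrow> 'b \<Rightarrow> real) \<Rightarrow> ('b \<Rightarrow> real)
    \<Rightarrow> ('a \<Rightarrow> 'b \<Rightarrow> real) \<Rightarrow> (nat \<Rightarrow> 'a \<Rightarrow> 'b \<Rightarrow> 'a \<Rightarrow> 'b \<Rightarrow> real) \<Rightarrow> bool" where
  "markov_coupling mX \<nu>X mY \<nu>Y \<pi> K \<longleftrightarrow>
     \<pi> \<in> coupling \<nu>X \<nu>Y \<and> (\<forall>t x y. K t x y \<in> coupling (mX x) (mY y))"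

fun mc_law :: "('a::finite \<Rightarrow> 'b::finite \<Rightarrow> real) \<Rightarrow> (nat \<Rightarrow> 'a \<Rightarrow> 'b \<Rightarrow> 'a \<Rightarrow> 'b \<Rightarrow> real)
    \<Rightarrow> nat \<Rightarrow> 'a \<Rightarrow> 'b \<Rightarrow> real" where
  "mc_law \<pi> K 0 = \<pi>"
| "mc_law \<pi> K (Suc t) =
     (\<lambda>x' y'. \<Sum>x\<in>UNIV. \<Sum>y\<in>UNIV. mc_law \<pi> K t x y * K t x y x' y')"

definition mc_expect :: "('a::finite \<Rightarrow> 'b::finite \<Rightarrow> real) \<Rightarrow> (nat \<Rightarrow> 'a \<Rightarrow> 'b \<Rightarrow> 'a \<Rightarrow> 'b \<Rightarrow> real)
    \<Rightarrow> ('a \<Rightarrow> 'b \<Rightarrow> real) \<Rightarrow> nat \<Rightarrow> real" where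
  "mc_expect \<pi> K C t = (\<Sum>x\<in>UNIV. \<Sum>y\<in>UNIV. mc_law \<pi> K t x y * C x y)"

text \<open>Expected discounted cost (linearity / monotone convergence for nonnegative C).\<close>
definition wl_objective :: "real \<Rightarrow> ('a::finite \<Rightarrow> 'b::finite \<Rightarrow> real)
    \<Rightarrow> ('a \<Rightarrow> 'b \<Rightarrow> real) \<Rightarrow> (nat \<Rightarrow> 'a \<Rightarrow> 'b \<Rightarrow> 'a \<Rightarrow> 'b \<Rightarrow> real) \<Rightarrow> enat \<Rightarrow> real" where
  "wl_objective \<delta> C \<pi> K k =
     (case k of enat n \<Rightarrow> (\<Sum>t<n. \<delta> * (1 - \<delta>) ^ t * mc_expect \<pi> K C t)
                          + (1 - \<delta>) ^ n * mc_expect \<pi> K C n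
              | \<infinity> \<Rightarrow> (\<Sum>t. \<delta> * (1 - \<delta>) ^ t * mc_expect \<pi> K C t))"

definition dWL :: "real \<Rightarrow> ('a::finite \<Rightarrow> 'a \<Rightarrow> real) \<Rightarrow> ('a \<Rightarrow> real)
    \<Rightarrow> ('b::finite \<Rightarrow> 'b \<Rightarrow> real) \<Rightarrow> ('b \<Rightarrow> real) \<Rightarrow> ('a \<Rightarrow> 'b \<Rightarrow> real) \<Rightarrow> enat \<Rightarrow> real" where
  "dWL \<delta> mX \<nu>X mY \<nu>Y C k =
     Inf {wl_objective \<delta> C \<pi> K k | \<pi> K. markov_coupling mX \<nu>X mY \<nu>Y \<pi> K}"

end

theory Submission
  imports Defs
begin

text \<open>The entropy term \<open>\<Sum> P ln P\<close> of a coupling lies in \<open>[-|X| |Y|, 0]\<close>, so entropic OT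
  is within \<open>\<epsilon> |X| |Y|\<close> of plain OT, and OT is 1-Lipschitz in the cost matrix for the sup
  norm. Along the recursion \<open>wl_cost\<close> these errors are damped by the factor \<open>1 - \<delta>\<close>, so the
  regularised and unregularised cost matrices stay within \<open>\<epsilon> |X| |Y| / \<delta>\<close> of each other,
  uniformly in the number of steps. For finite \<open>k\<close>, backward induction (dynamic programming)
  over Markovian couplings identifies \<open>dWL\<close> with plain OT for the unregularised cost matrix
  \<open>wl_cost 0 \<delta> mX mY C k\<close>. For \<open>k = \<infinity>\<close> both sides are geometrically convergent limits
  of their finite-horizon values, so the uniform \<open>O(\<epsilon>)\<close> bound passes to the limit.\<close>

lemma cINF_le_cINF_add:
  fixes f g :: "'p \<Rightarrow> real"
  assumes "S \<noteq> {}" "bdd_below (f ` S)" "\<And>s. s \<in> S \<Longrightarrow> f s \<le> g s + c"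
  shows "Inf (f ` S) \<le> Inf (g ` S) + c"
proof -
  have "Inf (f ` S) - c \<le> Inf (g ` S)"
  proof (rule cINF_greatest[OF assms(1)])
    fix s assume "s \<in> S"
    then have "Inf (f ` S) \<le> f s" using assms(2) by (auto intro: cINF_lower)
    with assms(3)[OF \<open>s \<in> S\<close>] show "Inf (f ` S) - c \<le> g s" by linarith
  qed
  then show ?thesis by linarith
qed

lemma abs_cINF_diff_le:
  fixes f g :: "'p \<Rightarrow> real"
  assumes "S \<noteq> {}" "bdd_below (f ` S)" "bdd_below (g ` S)"
    and "\<And>s. s \<in> S \<Longrightarrow> \<bar>f s - g s\<bar> \<le> c"
  shows "\<bar>Inf (f ` S) - Inf (g ` S)\<bar> \<le> c"
proof -
  have "Inf (f ` S) \<le> Inf (g ` S) + c"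
    by (rule cINF_le_cINF_add[OF assms(1,2)]) (use assms(4) in force)
  moreover have "Inf (g ` S) \<le> Inf (f ` S) + c"
    by (rule cINF_le_cINF_add[OF assms(1,3)]) (use assms(4) in force)
  ultimately show ?thesis by linarith
qed

lemma convergent_if_summable_differences:
  fixes a :: "nat \<Rightarrow> real"
  assumes "summable (\<lambda>n. a (Suc n) - a n)"
  shows "convergent a"
proof -
  have "convergent (\<lambda>n. a n - a 0)"
    using assms by (simp add: summable_iff_convergent sum_lessThan_telescope)
  then show ?thesis by (simp add: convergent_diff_const_right_iff)
qed

lemma sum_sum_swap_pairs:
  "(\<Sum>a\<in>A. \<Sum>b\<in>B. \<Sum>c\<in>C. \<Sum>d\<in>D. f a b c d) = (\<Sum>c\<in>C. \<Sum>d\<in>D. \<Sum>a\<in>A. \<Sum>b\<in>B. f a b c d)"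
proof -
  have "(\<Sum>a\<in>A. \<Sum>b\<in>B. \<Sum>c\<in>C. \<Sum>d\<in>D. f a b c d) = (\<Sum>a\<in>A. \<Sum>c\<in>C. \<Sum>b\<in>B. \<Sum>d\<in>D. f a b c d)"
    by (intro sum.cong refl sum.swap)
  also have "\<dots> = (\<Sum>c\<in>C. \<Sum>a\<in>A. \<Sum>d\<in>D. \<Sum>b\<in>B. f a b c d)"
    by (subst sum.swap) (intro sum.cong refl sum.swap)
  also have "\<dots> = (\<Sum>c\<in>C. \<Sum>d\<in>D. \<Sum>a\<in>A. \<Sum>b\<in>B. f a b c d)"
    by (intro sum.cong refl sum.swap)
  finally show ?thesis .
qed

lemma summable_discounted:
  fixes E :: "nat \<Rightarrow> real"
  assumes "0 < \<delta>" "\<delta> \<le> 1" "\<And>t. \<bar>E t\<bar> \<le> M"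
  shows "summable (\<lambda>t. \<delta> * (1 - \<delta>) ^ t * E t)"
proof (rule summable_comparison_test')
  show "summable (\<lambda>t. \<delta> * M * (1 - \<delta>) ^ t)"
    using assms by (intro summable_mult summable_geometric) auto
  show "norm (\<delta> * (1 - \<delta>) ^ t * E t) \<le> \<delta> * M * (1 - \<delta>) ^ t" for t
    using mult_left_mono[OF assms(3)[of t], of "\<delta> * (1 - \<delta>) ^ t"] assms(1,2)
    by (simp add: abs_mult mult_ac)
qed

lemma discounted_tail_bound:
  fixes E :: "nat \<Rightarrow> real"
  assumes "0 < \<delta>" "\<delta> \<le> 1" "\<And>t. 0 \<le> E t" "\<And>t. E t \<le> M"
  shows "\<bar>(\<Sum>t<n. \<delta> * (1 - \<delta>) ^ t * E t) + (1 - \<delta>) ^ n * E n - (\<Sum>t. \<delta> * (1 - \<delta>) ^ t * E t)\<bar>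
    \<le> (1 - \<delta>) ^ n * M"
proof -
  let ?f = "\<lambda>t. \<delta> * (1 - \<delta>) ^ t * E t"
  have "\<bar>E t\<bar> \<le> M" for t
    using assms(3,4)[of t] by simp
  with assms(1,2) have "summable ?f"
    by (rule summable_discounted)
  then have tail: "summable (\<lambda>t. ?f (t + n))" "(\<Sum>t. ?f t) = (\<Sum>t. ?f (t + n)) + (\<Sum>t<n. ?f t)"
    by (rule summable_ignore_initial_segment, rule suminf_split_initial_segment)
  have "(\<lambda>t. (\<delta> * (1 - \<delta>) ^ n * M) * (1 - \<delta>) ^ t) sums ((\<delta> * (1 - \<delta>) ^ n * M) * (1 / (1 - (1 - \<delta>))))"
    using assms(1,2) by (intro sums_mult geometric_sums) auto
  then have geom: "(\<lambda>t. \<delta> * (1 - \<delta>) ^ (t + n) * M) sums ((1 - \<delta>) ^ n * M)"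
    using assms(1) by (simp add: power_add mult_ac)
  have "(\<Sum>t. ?f (t + n)) \<le> (1 - \<delta>) ^ n * M"
    using assms by (intro sums_le[OF _ summable_sums[OF tail(1)] geom] mult_left_mono) auto
  moreover have "0 \<le> (\<Sum>t. ?f (t + n))"
    using assms by (intro suminf_nonneg tail(1)) auto
  moreover have "0 \<le> (1 - \<delta>) ^ n * E n" "(1 - \<delta>) ^ n * E n \<le> (1 - \<delta>) ^ n * M"
    using assms by (auto intro: mult_left_mono)
  ultimately show ?thesis
    using tail(2) by linarith
qed

lemma x_minus_one_le_x_ln_x:
  fixes x :: real
  assumes "0 \<le> x"
  shows "x - 1 \<le> x * ln x"
proof (cases "x = 0")
  case False
  with assms have "0 < x" by simp
  have "- ln x \<le> 1 / x - 1"
    using ln_le_minus_one[of "1 / x"] \<open>0 < x\<close> by (simp add: ln_div)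
  then have "x * - ln x \<le> x * (1 / x - 1)"
    using \<open>0 < x\<close> by (intro mult_left_mono) auto
  also have "\<dots> = 1 - x"
    using \<open>0 < x\<close> by (simp add: field_simps)
  finally show ?thesis by simp
qed simp

lemma x_ln_x_nonpos:
  fixes x :: real
  assumes "0 \<le> x" "x \<le> 1"
  shows "x * ln x \<le> 0"
  using assms by (cases "x = 0") (auto simp: mult_nonneg_nonpos)

definition prob_matrix :: "('a::finite \<Rightarrow> 'b::finite \<Rightarrow> real) \<Rightarrow> bool" where
  "prob_matrix P \<longleftrightarrow> (\<forall>i j. 0 \<le> P i j) \<and> (\<Sum>i\<in>UNIV. \<Sum>j\<in>UNIV. P i j) = 1"

definition transport_cost :: "('a::finite \<Rightarrow> 'b::finite \<Rightarrow> real) \<Rightarrow> ('a \<Rightarrow> 'b \<Rightarrow> real) \<Rightarrow> real" where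
  "transport_cost P D = (\<Sum>i\<in>UNIV. \<Sum>j\<in>UNIV. P i j * D i j)"

definition neg_entropy :: "('a::finite \<Rightarrow> 'b::finite \<Rightarrow> real) \<Rightarrow> real" where
  "neg_entropy P = (\<Sum>i\<in>UNIV. \<Sum>j\<in>UNIV. P i j * ln (P i j))"

lemma ot_eps_eq_INF:
  "ot_eps \<epsilon> \<alpha> \<beta> D = Inf ((\<lambda>P. transport_cost P D + \<epsilon> * neg_entropy P) ` coupling \<alpha> \<beta>)"
  by (simp add: ot_eps_def transport_cost_def neg_entropy_def)

lemma prob_matrix_le_one:
  assumes "prob_matrix P"
  shows "P i j \<le> 1"
proof -
  have "P i j \<le> (\<Sum>j\<in>UNIV. P i j)"
    using assms by (intro member_le_sum) (auto simp: prob_matrix_def)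
  also have "\<dots> \<le> (\<Sum>i\<in>UNIV. \<Sum>j\<in>UNIV. P i j)"
    using assms by (intro member_le_sum sum_nonneg) (auto simp: prob_matrix_def)
  finally show ?thesis
    using assms by (simp add: prob_matrix_def)
qed

lemma product_coupling:
  assumes "prob_vec \<alpha>" "prob_vec \<beta>"
  shows "(\<lambda>i j. \<alpha> i * \<beta> j) \<in> coupling \<alpha> \<beta>"
  using assms unfolding coupling_def prob_vec_def
  by (auto simp: sum_distrib_left[symmetric] sum_distrib_right[symmetric])

lemma coupling_prob_matrix:
  assumes "prob_vec \<alpha>" "P \<in> coupling \<alpha> \<beta>"
  shows "prob_matrix P"
  using assms by (auto simp: coupling_def prob_vec_def prob_matrix_def)

lemma neg_entropy_bounds:
  fixes P :: "'a::finite \<Rightarrow> 'b::finite \<Rightarrow> real"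
  assumes "prob_matrix P"
  shows "- (real CARD('a) * real CARD('b)) \<le> neg_entropy P" "neg_entropy P \<le> 0"
proof -
  have "-1 \<le> P i j * ln (P i j)" for i j
  proof -
    have "0 \<le> P i j"
      using assms by (simp add: prob_matrix_def)
    with x_minus_one_le_x_ln_x[of "P i j"] show ?thesis by linarith
  qed
  then have "(\<Sum>i\<in>(UNIV::'a set). \<Sum>j\<in>(UNIV::'b set). -1) \<le> neg_entropy P"
    unfolding neg_entropy_def by (intro sum_mono)
  then show "- (real CARD('a) * real CARD('b)) \<le> neg_entropy P"
    by simp
  show "neg_entropy P \<le> 0"
    unfolding neg_entropy_def using assms prob_matrix_le_one[OF assms]
    by (intro sum_nonpos x_ln_x_nonpos) (auto simp: prob_matrix_def)
qed

lemma transport_cost_lipschitz: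
  assumes "prob_matrix P" "\<And>i j. \<bar>D i j - D' i j\<bar> \<le> c"
  shows "\<bar>transport_cost P D - transport_cost P D'\<bar> \<le> c"
proof -
  have "\<bar>transport_cost P D - transport_cost P D'\<bar>
      = \<bar>\<Sum>i\<in>UNIV. \<Sum>j\<in>UNIV. P i j * (D i j - D' i j)\<bar>"
    by (simp add: transport_cost_def sum_subtractf right_diff_distrib)
  also have "\<dots> \<le> (\<Sum>i\<in>UNIV. \<Sum>j\<in>UNIV. \<bar>P i j * (D i j - D' i j)\<bar>)"
    by (rule order_trans[OF sum_abs]) (intro sum_mono sum_abs)
  also have "\<dots> \<le> (\<Sum>i\<in>UNIV. \<Sum>j\<in>UNIV. P i j * c)"
    using assms by (intro sum_mono) (simp add: prob_matrix_def abs_mult mult_left_mono)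
  also have "\<dots> = c"
    using assms by (simp add: prob_matrix_def sum_distrib_right[symmetric])
  finally show ?thesis .
qed

lemma transport_cost_bounds:
  assumes "prob_matrix P" "\<And>i j. 0 \<le> D i j"
  shows "0 \<le> transport_cost P D" "transport_cost P D \<le> (\<Sum>i\<in>UNIV. \<Sum>j\<in>UNIV. D i j)"
  using assms prob_matrix_le_one[OF assms(1)] unfolding transport_cost_def
  by (auto simp: prob_matrix_def intro!: sum_nonneg sum_mono mult_left_le_one_le)

lemma transport_cost_mono:
  assumes "prob_matrix P" "\<And>i j. D i j \<le> D' i j"
  shows "transport_cost P D \<le> transport_cost P D'"
  using assms unfolding transport_cost_def prob_matrix_def
  by (intro sum_mono mult_left_mono) auto

lemma transport_cost_const:
  assumes "prob_matrix P"
  shows "transport_cost P (\<lambda>_ _. c) = c"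
  using assms by (simp add: transport_cost_def prob_matrix_def sum_distrib_right[symmetric])

lemma bdd_below_ot_objective:
  fixes D :: "'a::finite \<Rightarrow> 'b::finite \<Rightarrow> real"
  assumes "prob_vec \<alpha>" "0 \<le> \<epsilon>"
  shows "bdd_below ((\<lambda>P. transport_cost P D + \<epsilon> * neg_entropy P) ` coupling \<alpha> \<beta>)"
proof (rule bdd_belowI2)
  define m where "m = Min (range (case_prod D))"
  fix P assume "P \<in> coupling \<alpha> \<beta>"
  with assms(1) have P: "prob_matrix P"
    by (rule coupling_prob_matrix)
  have "m \<le> D i j" for i j
    unfolding m_def by (rule Min_le) auto
  then have "m \<le> transport_cost P D"
    using transport_cost_mono[OF P, of "\<lambda>_ _. m" D] transport_cost_const[OF P] by simp
  moreover have "\<epsilon> * - (real CARD('a) * real CARD('b)) \<le> \<epsilon> * neg_entropy P"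
    using neg_entropy_bounds[OF P] assms(2) by (intro mult_left_mono) auto
  ultimately show "m + \<epsilon> * - (real CARD('a) * real CARD('b)) \<le> transport_cost P D + \<epsilon> * neg_entropy P"
    by linarith
qed

lemma ot_eps_lipschitz:
  assumes "prob_vec \<alpha>" "prob_vec \<beta>" "0 \<le> \<epsilon>" "\<And>i j. \<bar>D i j - D' i j\<bar> \<le> c"
  shows "\<bar>ot_eps \<epsilon> \<alpha> \<beta> D - ot_eps \<epsilon> \<alpha> \<beta> D'\<bar> \<le> c"
  unfolding ot_eps_eq_INF
proof (rule abs_cINF_diff_le)
  fix P assume "P \<in> coupling \<alpha> \<beta>"
  with assms(1) have "prob_matrix P"
    by (rule coupling_prob_matrix)
  then show "\<bar>transport_cost P D + \<epsilon> * neg_entropy P - (transport_cost P D' + \<epsilon> * neg_entropy P)\<bar> \<le> c"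
    using transport_cost_lipschitz[OF _ assms(4)] by simp
qed (use product_coupling[OF assms(1,2)] bdd_below_ot_objective[OF assms(1,3)] in auto)

lemma ot_eps_regularization_error:
  fixes \<alpha> :: "'a::finite \<Rightarrow> real" and \<beta> :: "'b::finite \<Rightarrow> real"
  assumes "prob_vec \<alpha>" "prob_vec \<beta>" "0 \<le> \<epsilon>"
  shows "\<bar>ot_eps \<epsilon> \<alpha> \<beta> D - ot_eps 0 \<alpha> \<beta> D\<bar> \<le> \<epsilon> * (real CARD('a) * real CARD('b))"
  unfolding ot_eps_eq_INF
proof (rule abs_cINF_diff_le)
  fix P assume "P \<in> coupling \<alpha> \<beta>"
  with assms(1) have "prob_matrix P"
    by (rule coupling_prob_matrix)
  then have "\<bar>neg_entropy P\<bar> \<le> real CARD('a) * real CARD('b)"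
    using neg_entropy_bounds[of P] by (simp add: abs_le_iff)
  then show "\<bar>transport_cost P D + \<epsilon> * neg_entropy P - (transport_cost P D + 0 * neg_entropy P)\<bar>
      \<le> \<epsilon> * (real CARD('a) * real CARD('b))"
    using assms(3) by (simp add: abs_mult mult_left_mono)
next
  show "coupling \<alpha> \<beta> \<noteq> {}"
    using product_coupling[OF assms(1,2)] by blast
  show "bdd_below ((\<lambda>P. transport_cost P D + \<epsilon> * neg_entropy P) ` coupling \<alpha> \<beta>)"
    by (rule bdd_below_ot_objective[OF assms(1,3)])
  show "bdd_below ((\<lambda>P. transport_cost P D + 0 * neg_entropy P) ` coupling \<alpha> \<beta>)"
    by (rule bdd_below_ot_objective[OF assms(1) order_refl])
qed

lemma ot_zero_le_transport_cost:
  assumes "prob_vec \<alpha>" "P \<in> coupling \<alpha> \<beta>"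
  shows "ot_eps 0 \<alpha> \<beta> D \<le> transport_cost P D"
  using assms bdd_below_ot_objective[OF assms(1), of 0 D \<beta>]
  by (auto simp: ot_eps_eq_INF intro: cINF_lower)

lemma ot_zero_near_optimal_coupling:
  assumes "prob_vec \<alpha>" "prob_vec \<beta>" "0 < \<eta>"
  obtains P where "P \<in> coupling \<alpha> \<beta>" "transport_cost P D < ot_eps 0 \<alpha> \<beta> D + \<eta>"
proof -
  have "Inf ((\<lambda>P. transport_cost P D) ` coupling \<alpha> \<beta>) < ot_eps 0 \<alpha> \<beta> D + \<eta>"
    using assms(3) by (simp add: ot_eps_eq_INF)
  then show ?thesis
    using that cINF_less_iff[of "coupling \<alpha> \<beta>" "\<lambda>P. transport_cost P D"] product_coupling[OF assms(1,2)]
      bdd_below_ot_objective[OF assms(1), of 0 D \<beta>]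
    by auto
qed

definition step_law ::
    "('a::finite \<Rightarrow> 'b::finite \<Rightarrow> real) \<Rightarrow> ('a \<Rightarrow> 'b \<Rightarrow> 'a \<Rightarrow> 'b \<Rightarrow> real) \<Rightarrow> 'a \<Rightarrow> 'b \<Rightarrow> real" where
  "step_law \<pi> Q = (\<lambda>x' y'. \<Sum>x\<in>UNIV. \<Sum>y\<in>UNIV. \<pi> x y * Q x y x' y')"

definition coupling_kernels :: "('a::finite \<Rightarrow> 'a \<Rightarrow> real) \<Rightarrow> ('b::finite \<Rightarrow> 'b \<Rightarrow> real)
    \<Rightarrow> (nat \<Rightarrow> 'a \<Rightarrow> 'b \<Rightarrow> 'a \<Rightarrow> 'b \<Rightarrow> real) \<Rightarrow> bool" where
  "coupling_kernels mX mY K \<longleftrightarrow> (\<forall>t x y. K t x y \<in> coupling (mX x) (mY y))"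

lemma mc_law_Suc_step_law: "mc_law \<pi> K (Suc t) = step_law (mc_law \<pi> K t) (K t)"
  by (simp add: step_law_def)

lemma mc_law_Suc_shift: "mc_law \<pi> K (Suc t) = mc_law (step_law \<pi> (K 0)) (\<lambda>t. K (Suc t)) t"
  by (induction t) (simp_all add: mc_law_Suc_step_law del: mc_law.simps(2))

lemma mc_expect_eq_transport_cost: "mc_expect \<pi> K C t = transport_cost (mc_law \<pi> K t) C"
  by (simp add: mc_expect_def transport_cost_def)

lemma transport_cost_step_law:
  "transport_cost (step_law \<pi> Q) D = (\<Sum>x\<in>UNIV. \<Sum>y\<in>UNIV. \<pi> x y * transport_cost (Q x y) D)"
  using sum_sum_swap_pairs[of "\<lambda>x' y' x y. \<pi> x y * (Q x y x' y' * D x' y')" UNIV UNIV UNIV UNIV]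
  by (simp add: transport_cost_def step_law_def sum_distrib_left sum_distrib_right mult.assoc)

lemma step_law_prob_matrix:
  assumes "prob_matrix \<pi>" "\<And>x y. prob_matrix (Q x y)"
  shows "prob_matrix (step_law \<pi> Q)"
proof -
  have "transport_cost (step_law \<pi> Q) (\<lambda>_ _. 1) = (\<Sum>x\<in>UNIV. \<Sum>y\<in>UNIV. \<pi> x y * 1)"
    by (simp only: transport_cost_step_law transport_cost_const[OF assms(2)])
  then show ?thesis
    using assms by (auto simp: prob_matrix_def transport_cost_def step_law_def intro!: sum_nonneg)
qed

lemma mc_law_prob_matrix:
  assumes "prob_matrix \<pi>" "\<And>t x y. prob_matrix (K t x y)"
  shows "prob_matrix (mc_law \<pi> K t)"
  using assms by (induction t) (simp_all add: mc_law_Suc_step_law step_law_prob_matrix del: mc_law.simps(2))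

lemma wl_objective_enat_Suc:
  "wl_objective \<delta> C \<pi> K (enat (Suc n))
     = \<delta> * transport_cost \<pi> C + (1 - \<delta>) * wl_objective \<delta> C (step_law \<pi> (K 0)) (\<lambda>t. K (Suc t)) (enat n)"
proof -
  let ?E = "mc_expect \<pi> K C" and ?E' = "mc_expect (step_law \<pi> (K 0)) (\<lambda>t. K (Suc t)) C"
  have shift: "?E (Suc t) = ?E' t" for t
    by (simp only: mc_expect_def mc_law_Suc_shift)
  have start: "?E 0 = transport_cost \<pi> C"
    by (simp add: mc_expect_eq_transport_cost)
  have "wl_objective \<delta> C \<pi> K (enat (Suc n))
      = \<delta> * (1 - \<delta>) ^ 0 * ?E 0 + (\<Sum>t<n. \<delta> * (1 - \<delta>) ^ Suc t * ?E (Suc t)) + (1 - \<delta>) ^ Suc n * ?E (Suc n)"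
    by (simp only: wl_objective_def enat.case sum.lessThan_Suc_shift)
  also have "\<dots> = \<delta> * transport_cost \<pi> C + (1 - \<delta>) * ((\<Sum>t<n. \<delta> * (1 - \<delta>) ^ t * ?E' t) + (1 - \<delta>) ^ n * ?E' n)"
    by (simp add: shift start sum_distrib_left algebra_simps)
  finally show ?thesis
    by (simp add: wl_objective_def)
qed

lemma transport_cost_wl_cost_Suc:
  "transport_cost \<pi> (wl_cost \<epsilon> \<delta> mX mY C (Suc n))
     = \<delta> * transport_cost \<pi> C
       + (1 - \<delta>) * (\<Sum>x\<in>UNIV. \<Sum>y\<in>UNIV. \<pi> x y * ot_eps \<epsilon> (mX x) (mY y) (wl_cost \<epsilon> \<delta> mX mY C n))"
  by (simp only: transport_cost_def wl_cost.simps(2) distrib_left sum.distrib sum_distrib_left mult.left_commute)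

lemma dWL_eq_INF:
  "dWL \<delta> mX \<nu>X mY \<nu>Y C k
     = Inf ((\<lambda>(\<pi>, K). wl_objective \<delta> C \<pi> K k) ` (coupling \<nu>X \<nu>Y \<times> Collect (coupling_kernels mX mY)))"
  unfolding dWL_def markov_coupling_def coupling_kernels_def
  by (rule arg_cong[of _ _ Inf]) (auto simp: image_def)

locale markov_chain_pair =
  fixes mX :: "'x::finite \<Rightarrow> 'x \<Rightarrow> real" and \<nu>X :: "'x \<Rightarrow> real"
    and mY :: "'y::finite \<Rightarrow> 'y \<Rightarrow> real" and \<nu>Y :: "'y \<Rightarrow> real"
  assumes kernel_X: "markov_kernel mX" and init_X: "prob_vec \<nu>X"
    and kernel_Y: "markov_kernel mY" and init_Y: "prob_vec \<nu>Y"
begin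

lemma prob_vec_mX: "prob_vec (mX x)"
  using kernel_X by (simp add: markov_kernel_def)

lemma prob_vec_mY: "prob_vec (mY y)"
  using kernel_Y by (simp add: markov_kernel_def)

lemma coupling_kernels_prob_matrix:
  assumes "coupling_kernels mX mY K"
  shows "prob_matrix (K t x y)"
  by (meson assms coupling_kernels_def coupling_prob_matrix prob_vec_mX)

lemma coupling_kernels_exist: "coupling_kernels mX mY (\<lambda>t x y i j. mX x i * mY y j)"
  using product_coupling[OF prob_vec_mX prob_vec_mY] by (simp add: coupling_kernels_def)

lemma transport_cost_wl_cost_le_wl_objective:
  assumes "\<delta> \<le> 1" "coupling_kernels mX mY K" "prob_matrix \<pi>"
  shows "transport_cost \<pi> (wl_cost 0 \<delta> mX mY C n) \<le> wl_objective \<delta> C \<pi> K (enat n)"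
  using assms(2,3)
proof (induction n arbitrary: \<pi> K)
  case 0
  then show ?case
    by (simp add: wl_objective_def mc_expect_eq_transport_cost)
next
  case (Suc n)
  let ?W = "wl_cost 0 \<delta> mX mY C n" and ?\<pi>' = "step_law \<pi> (K 0)" and ?K' = "\<lambda>t. K (Suc t)"
  have "(\<Sum>x\<in>UNIV. \<Sum>y\<in>UNIV. \<pi> x y * ot_eps 0 (mX x) (mY y) ?W)
      \<le> (\<Sum>x\<in>UNIV. \<Sum>y\<in>UNIV. \<pi> x y * transport_cost (K 0 x y) ?W)"
    using Suc.prems prob_vec_mX
    by (intro sum_mono mult_left_mono ot_zero_le_transport_cost) (auto simp: coupling_kernels_def prob_matrix_def)
  also have "\<dots> = transport_cost ?\<pi>' ?W"
    by (rule transport_cost_step_law[symmetric])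
  also have "\<dots> \<le> wl_objective \<delta> C ?\<pi>' ?K' (enat n)"
    using Suc.prems coupling_kernels_prob_matrix
    by (intro Suc.IH step_law_prob_matrix) (auto simp: coupling_kernels_def)
  finally show ?case
    using assms(1) by (simp add: transport_cost_wl_cost_Suc wl_objective_enat_Suc mult_left_mono del: wl_cost.simps)
qed

lemma near_optimal_coupling_kernels:
  assumes "0 \<le> \<delta>" "\<delta> \<le> 1" "0 < \<eta>"
  shows "\<exists>K. coupling_kernels mX mY K \<and>
    (\<forall>\<pi>. prob_matrix \<pi> \<longrightarrow> wl_objective \<delta> C \<pi> K (enat n) \<le> transport_cost \<pi> (wl_cost 0 \<delta> mX mY C n) + \<eta>)"
  using assms(3)
proof (induction n arbitrary: \<eta>)
  case 0
  then show ?case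
    using coupling_kernels_exist by (auto simp: wl_objective_def mc_expect_eq_transport_cost)
next
  case (Suc n)
  let ?W = "wl_cost 0 \<delta> mX mY C n"
  obtain K' where K': "coupling_kernels mX mY K'"
    "\<And>\<pi>. prob_matrix \<pi> \<Longrightarrow> wl_objective \<delta> C \<pi> K' (enat n) \<le> transport_cost \<pi> ?W + \<eta> / 2"
    using Suc.IH[of "\<eta> / 2"] Suc.prems by auto
  have "\<forall>x y. \<exists>P. P \<in> coupling (mX x) (mY y) \<and> transport_cost P ?W < ot_eps 0 (mX x) (mY y) ?W + \<eta> / 2"
    by (meson ot_zero_near_optimal_coupling prob_vec_mX prob_vec_mY Suc.prems half_gt_zero)
  then obtain Q where Q: "\<And>x y. Q x y \<in> coupling (mX x) (mY y)"
    "\<And>x y. transport_cost (Q x y) ?W < ot_eps 0 (mX x) (mY y) ?W + \<eta> / 2"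
    by metis
  define K where "K = case_nat Q K'"
  have K: "coupling_kernels mX mY K"
    using Q(1) K'(1) by (auto simp: coupling_kernels_def K_def split: nat.splits)
  have "wl_objective \<delta> C \<pi> K (enat (Suc n)) \<le> transport_cost \<pi> (wl_cost 0 \<delta> mX mY C (Suc n)) + \<eta>"
    if \<pi>: "prob_matrix \<pi>" for \<pi>
  proof -
    have \<pi>': "prob_matrix (step_law \<pi> Q)"
      using \<pi> Q(1) prob_vec_mX coupling_prob_matrix by (blast intro: step_law_prob_matrix)
    have "transport_cost (step_law \<pi> Q) ?W = (\<Sum>x\<in>UNIV. \<Sum>y\<in>UNIV. \<pi> x y * transport_cost (Q x y) ?W)"
      by (rule transport_cost_step_law)
    also have "\<dots> \<le> (\<Sum>x\<in>UNIV. \<Sum>y\<in>UNIV. \<pi> x y * (ot_eps 0 (mX x) (mY y) ?W + \<eta> / 2))"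
      using \<pi> Q(2) by (intro sum_mono mult_left_mono) (auto simp: prob_matrix_def less_imp_le)
    also have "\<dots> = (\<Sum>x\<in>UNIV. \<Sum>y\<in>UNIV. \<pi> x y * ot_eps 0 (mX x) (mY y) ?W) + \<eta> / 2"
      using transport_cost_const[OF \<pi>, of "\<eta> / 2"] by (simp add: transport_cost_def distrib_left sum.distrib)
    finally have "transport_cost (step_law \<pi> Q) ?W \<le> (\<Sum>x\<in>UNIV. \<Sum>y\<in>UNIV. \<pi> x y * ot_eps 0 (mX x) (mY y) ?W) + \<eta> / 2" .
    then have tail: "wl_objective \<delta> C (step_law \<pi> Q) K' (enat n)
        \<le> (\<Sum>x\<in>UNIV. \<Sum>y\<in>UNIV. \<pi> x y * ot_eps 0 (mX x) (mY y) ?W) + \<eta>"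
      using K'(2)[OF \<pi>'] by linarith
    have "wl_objective \<delta> C \<pi> K (enat (Suc n)) \<le> transport_cost \<pi> (wl_cost 0 \<delta> mX mY C (Suc n)) + (1 - \<delta>) * \<eta>"
      using mult_left_mono[OF tail, of "1 - \<delta>"] assms(2)
      by (simp add: wl_objective_enat_Suc transport_cost_wl_cost_Suc K_def distrib_left del: wl_cost.simps)
    also have "\<dots> \<le> transport_cost \<pi> (wl_cost 0 \<delta> mX mY C (Suc n)) + \<eta>"
      using assms(1) Suc.prems by (simp add: mult_left_le_one_le)
    finally show ?thesis .
  qed
  with K show ?case by blast
qed

lemma dWL_enat:
  assumes "0 \<le> \<delta>" "\<delta> \<le> 1"
  shows "dWL \<delta> mX \<nu>X mY \<nu>Y C (enat n) = ot_eps 0 \<nu>X \<nu>Y (wl_cost 0 \<delta> mX mY C n)"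
proof -
  let ?S = "coupling \<nu>X \<nu>Y \<times> Collect (coupling_kernels mX mY)"
    and ?f = "\<lambda>(\<pi>, K). wl_objective \<delta> C \<pi> K (enat n)"
    and ?d = "ot_eps 0 \<nu>X \<nu>Y (wl_cost 0 \<delta> mX mY C n)"
  have lower: "?d \<le> ?f s" if "s \<in> ?S" for s
  proof -
    obtain \<pi> K where s: "s = (\<pi>, K)" "\<pi> \<in> coupling \<nu>X \<nu>Y" "coupling_kernels mX mY K"
      using \<open>s \<in> ?S\<close> by auto
    then have "?d \<le> transport_cost \<pi> (wl_cost 0 \<delta> mX mY C n)"
      using init_X by (intro ot_zero_le_transport_cost)
    also have "\<dots> \<le> ?f s"
      using s assms(2) init_X coupling_prob_matrix by (auto intro: transport_cost_wl_cost_le_wl_objective)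
    finally show ?thesis .
  qed
  have "?S \<noteq> {}"
    using product_coupling[OF init_X init_Y] coupling_kernels_exist by blast
  then have "?d \<le> Inf (?f ` ?S)"
    using lower by (intro cINF_greatest)
  moreover have "Inf (?f ` ?S) \<le> ?d + e" if "0 < e" for e
  proof -
    obtain K where K: "coupling_kernels mX mY K"
      "\<And>\<pi>. prob_matrix \<pi> \<Longrightarrow> wl_objective \<delta> C \<pi> K (enat n) \<le> transport_cost \<pi> (wl_cost 0 \<delta> mX mY C n) + e / 2"
      using near_optimal_coupling_kernels[OF assms, where \<eta> = "e / 2" and C = C and n = n] \<open>0 < e\<close> by auto
    obtain \<pi> where \<pi>: "\<pi> \<in> coupling \<nu>X \<nu>Y" "transport_cost \<pi> (wl_cost 0 \<delta> mX mY C n) < ?d + e / 2"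
      using ot_zero_near_optimal_coupling[OF init_X init_Y, of "e / 2"] \<open>0 < e\<close> by auto
    have "Inf (?f ` ?S) \<le> ?f (\<pi>, K)"
      using \<pi>(1) K(1) lower by (intro cINF_lower bdd_belowI2) auto
    also have "\<dots> \<le> ?d + e"
      using K(2)[OF coupling_prob_matrix[OF init_X \<pi>(1)]] \<pi>(2) by simp
    finally show ?thesis .
  qed
  ultimately show ?thesis
    unfolding dWL_eq_INF by (meson antisym field_le_epsilon)
qed

lemma mc_expect_bounds:
  assumes "\<And>x y. 0 \<le> C x y" "coupling_kernels mX mY K" "prob_matrix \<pi>"
  shows "0 \<le> mc_expect \<pi> K C t" "mc_expect \<pi> K C t \<le> (\<Sum>x\<in>UNIV. \<Sum>y\<in>UNIV. C x y)"
proof -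
  have "prob_matrix (mc_law \<pi> K t)"
    using assms(2,3) coupling_kernels_prob_matrix by (intro mc_law_prob_matrix)
  then show "0 \<le> mc_expect \<pi> K C t" "mc_expect \<pi> K C t \<le> (\<Sum>x\<in>UNIV. \<Sum>y\<in>UNIV. C x y)"
    unfolding mc_expect_eq_transport_cost using transport_cost_bounds assms(1) by auto
qed

lemma wl_objective_infinity_approx:
  assumes "0 < \<delta>" "\<delta> \<le> 1" "\<And>x y. 0 \<le> C x y" "coupling_kernels mX mY K" "prob_matrix \<pi>"
  shows "\<bar>wl_objective \<delta> C \<pi> K (enat n) - wl_objective \<delta> C \<pi> K \<infinity>\<bar>
    \<le> (1 - \<delta>) ^ n * (\<Sum>x\<in>UNIV. \<Sum>y\<in>UNIV. C x y)"
  unfolding wl_objective_def enat.case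
  using assms(1,2) mc_expect_bounds[of C K \<pi>, OF assms(3-5)] by (rule discounted_tail_bound)

lemma wl_objective_nonneg:
  assumes "0 < \<delta>" "\<delta> \<le> 1" "\<And>x y. 0 \<le> C x y" "coupling_kernels mX mY K" "prob_matrix \<pi>"
  shows "0 \<le> wl_objective \<delta> C \<pi> K k"
proof -
  note E = mc_expect_bounds[of C K \<pi>, OF assms(3-5)]
  have "\<bar>mc_expect \<pi> K C t\<bar> \<le> (\<Sum>x\<in>UNIV. \<Sum>y\<in>UNIV. C x y)" for t
    using E by simp
  with assms(1,2) have "summable (\<lambda>t. \<delta> * (1 - \<delta>) ^ t * mc_expect \<pi> K C t)"
    by (rule summable_discounted)
  then show ?thesis
    using assms(1,2) E(1)
    by (auto simp: wl_objective_def split: enat.split intro!: add_nonneg_nonneg sum_nonneg mult_nonneg_nonneg suminf_nonneg)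
qed

lemma dWL_enat_tendsto_infinity:
  assumes "0 < \<delta>" "\<delta> \<le> 1" "\<And>x y. 0 \<le> C x y"
  shows "(\<lambda>n. dWL \<delta> mX \<nu>X mY \<nu>Y C (enat n)) \<longlonglongrightarrow> dWL \<delta> mX \<nu>X mY \<nu>Y C \<infinity>"
proof -
  let ?S = "coupling \<nu>X \<nu>Y \<times> Collect (coupling_kernels mX mY)"
    and ?M = "\<Sum>x\<in>UNIV. \<Sum>y\<in>UNIV. C x y"
  have "?S \<noteq> {}"
    using product_coupling[OF init_X init_Y] coupling_kernels_exist by blast
  have bdd: "bdd_below ((\<lambda>(\<pi>, K). wl_objective \<delta> C \<pi> K k) ` ?S)" for k
    by (intro bdd_belowI2[of _ 0]) (auto intro!: wl_objective_nonneg[of \<delta> C, OF assms] coupling_prob_matrix[OF init_X])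
  have "\<bar>dWL \<delta> mX \<nu>X mY \<nu>Y C (enat n) - dWL \<delta> mX \<nu>X mY \<nu>Y C \<infinity>\<bar> \<le> (1 - \<delta>) ^ n * ?M" for n
    unfolding dWL_eq_INF
    using \<open>?S \<noteq> {}\<close> bdd
    by (intro abs_cINF_diff_le) (auto intro!: wl_objective_infinity_approx[of \<delta> C, OF assms] coupling_prob_matrix[OF init_X])
  moreover have "(\<lambda>n. (1 - \<delta>) ^ n * ?M) \<longlonglongrightarrow> 0"
    using assms(1,2) by (intro tendsto_mult_left_zero LIMSEQ_power_zero) auto
  ultimately show ?thesis
    by (subst LIM_zero_iff[symmetric]) (rule Lim_null_comparison[OF always_eventually]; simp)
qed

lemma wl_cost_regularization_error:
  assumes "0 \<le> \<epsilon>" "0 < \<delta>" "\<delta> \<le> 1"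
  shows "\<bar>wl_cost \<epsilon> \<delta> mX mY C n i j - wl_cost 0 \<delta> mX mY C n i j\<bar> \<le> \<epsilon> * (real CARD('x) * real CARD('y)) / \<delta>"
proof (induction n arbitrary: i j)
  case 0
  then show ?case
    using assms by simp
next
  case (Suc n)
  let ?N = "real CARD('x) * real CARD('y)"
    and ?ot = "\<lambda>\<epsilon>'. ot_eps \<epsilon>' (mX i) (mY j)"
  have "\<bar>?ot \<epsilon> (wl_cost \<epsilon> \<delta> mX mY C n) - ?ot \<epsilon> (wl_cost 0 \<delta> mX mY C n)\<bar> \<le> \<epsilon> * ?N / \<delta>"
    using Suc.IH by (intro ot_eps_lipschitz prob_vec_mX prob_vec_mY assms(1))
  moreover have "\<bar>?ot \<epsilon> (wl_cost 0 \<delta> mX mY C n) - ?ot 0 (wl_cost 0 \<delta> mX mY C n)\<bar> \<le> \<epsilon> * ?N"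
    by (intro ot_eps_regularization_error prob_vec_mX prob_vec_mY assms(1))
  ultimately have "\<bar>wl_cost \<epsilon> \<delta> mX mY C (Suc n) i j - wl_cost 0 \<delta> mX mY C (Suc n) i j\<bar>
      \<le> (1 - \<delta>) * (\<epsilon> * ?N / \<delta> + \<epsilon> * ?N)"
    using assms(3) by (simp add: right_diff_distrib[symmetric] abs_mult mult_left_mono)
  also have "\<dots> = \<epsilon> * ?N / \<delta> - \<epsilon> * ?N * \<delta>"
    using assms(2) by (simp add: field_simps)
  also have "\<dots> \<le> \<epsilon> * ?N / \<delta>"
    using assms(1,2) by simp
  finally show ?case .
qed

lemma dWL_eps_fin_regularization_error:
  assumes "0 \<le> \<epsilon>" "0 < \<delta>" "\<delta> \<le> 1"
  shows "\<bar>dWL_eps_fin \<epsilon> \<delta> mX \<nu>X mY \<nu>Y C n - dWL_eps_fin 0 \<delta> mX \<nu>X mY \<nu>Y C n\<bar>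
    \<le> \<epsilon> * (real CARD('x) * real CARD('y)) / \<delta> + \<epsilon> * (real CARD('x) * real CARD('y))"
proof -
  have "\<bar>ot_eps \<epsilon> \<nu>X \<nu>Y (wl_cost \<epsilon> \<delta> mX mY C n) - ot_eps \<epsilon> \<nu>X \<nu>Y (wl_cost 0 \<delta> mX mY C n)\<bar>
      \<le> \<epsilon> * (real CARD('x) * real CARD('y)) / \<delta>"
    using wl_cost_regularization_error[OF assms] by (intro ot_eps_lipschitz init_X init_Y assms(1))
  moreover have "\<bar>ot_eps \<epsilon> \<nu>X \<nu>Y (wl_cost 0 \<delta> mX mY C n) - ot_eps 0 \<nu>X \<nu>Y (wl_cost 0 \<delta> mX mY C n)\<bar>
      \<le> \<epsilon> * (real CARD('x) * real CARD('y))"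
    by (intro ot_eps_regularization_error init_X init_Y assms(1))
  ultimately show ?thesis
    unfolding dWL_eps_fin_def by linarith
qed

lemma wl_cost_Suc_diff_le:
  assumes "0 \<le> \<epsilon>" "\<delta> \<le> 1" "\<And>i j. \<bar>wl_cost \<epsilon> \<delta> mX mY C 1 i j - C i j\<bar> \<le> R"
  shows "\<bar>wl_cost \<epsilon> \<delta> mX mY C (Suc n) i j - wl_cost \<epsilon> \<delta> mX mY C n i j\<bar> \<le> (1 - \<delta>) ^ n * R"
proof (induction n arbitrary: i j)
  case 0
  then show ?case
    using assms(3) by simp
next
  case (Suc n)
  have "\<bar>ot_eps \<epsilon> (mX i) (mY j) (wl_cost \<epsilon> \<delta> mX mY C (Suc n)) - ot_eps \<epsilon> (mX i) (mY j) (wl_cost \<epsilon> \<delta> mX mY C n)\<bar>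
      \<le> (1 - \<delta>) ^ n * R"
    using Suc.IH by (intro ot_eps_lipschitz prob_vec_mX prob_vec_mY assms(1))
  then have "(1 - \<delta>) * \<bar>ot_eps \<epsilon> (mX i) (mY j) (wl_cost \<epsilon> \<delta> mX mY C (Suc n))
      - ot_eps \<epsilon> (mX i) (mY j) (wl_cost \<epsilon> \<delta> mX mY C n)\<bar> \<le> (1 - \<delta>) * ((1 - \<delta>) ^ n * R)"
    using assms(2) by (intro mult_left_mono) auto
  then show ?case
    using assms(2) by (simp only: wl_cost.simps(2)) (simp add: right_diff_distrib[symmetric] abs_mult)
qed

lemma dWL_eps_fin_convergent:
  assumes "0 \<le> \<epsilon>" "0 < \<delta>" "\<delta> \<le> 1"
  shows "convergent (\<lambda>n. dWL_eps_fin \<epsilon> \<delta> mX \<nu>X mY \<nu>Y C n)"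
proof (rule convergent_if_summable_differences)
  define R where "R = Max (range (\<lambda>(i, j). \<bar>wl_cost \<epsilon> \<delta> mX mY C 1 i j - C i j\<bar>))"
  have "\<bar>wl_cost \<epsilon> \<delta> mX mY C 1 i j - C i j\<bar> \<le> R" for i j
    unfolding R_def by (rule Max_ge) auto
  note diff = wl_cost_Suc_diff_le[of \<epsilon> \<delta> C R, OF assms(1,3) this]
  have step: "\<bar>dWL_eps_fin \<epsilon> \<delta> mX \<nu>X mY \<nu>Y C (Suc n) - dWL_eps_fin \<epsilon> \<delta> mX \<nu>X mY \<nu>Y C n\<bar> \<le> (1 - \<delta>) ^ n * R" for n
    unfolding dWL_eps_fin_def by (intro ot_eps_lipschitz init_X init_Y assms(1) diff)
  have "summable (\<lambda>n. (1 - \<delta>) ^ n * R)"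
    using assms by (intro summable_mult2 summable_geometric) auto
  then show "summable (\<lambda>n. dWL_eps_fin \<epsilon> \<delta> mX \<nu>X mY \<nu>Y C (Suc n) - dWL_eps_fin \<epsilon> \<delta> mX \<nu>X mY \<nu>Y C n)"
    by (rule summable_comparison_test') (simp only: real_norm_def step)
qed

lemma dWL_eps_regularization_error:
  assumes "0 \<le> \<epsilon>" "0 < \<delta>" "\<delta> \<le> 1" "\<And>x y. 0 \<le> C x y"
  shows "\<bar>dWL_eps \<epsilon> \<delta> mX \<nu>X mY \<nu>Y C k - dWL \<delta> mX \<nu>X mY \<nu>Y C k\<bar>
    \<le> \<epsilon> * (real CARD('x) * real CARD('y)) / \<delta> + \<epsilon> * (real CARD('x) * real CARD('y))"
    (is "_ \<le> ?B")
proof -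
  have dWL_fin: "dWL \<delta> mX \<nu>X mY \<nu>Y C (enat n) = dWL_eps_fin 0 \<delta> mX \<nu>X mY \<nu>Y C n" for n
    using assms(2,3) by (simp add: dWL_enat dWL_eps_fin_def)
  show ?thesis
  proof (cases k)
    case (enat n)
    then show ?thesis
      using dWL_eps_fin_regularization_error[OF assms(1-3)] by (simp add: dWL_eps_def dWL_fin)
  next
    case infinity
    let ?d = "\<lambda>n. dWL_eps_fin \<epsilon> \<delta> mX \<nu>X mY \<nu>Y C n"
    have "(\<lambda>n. \<bar>?d n - dWL \<delta> mX \<nu>X mY \<nu>Y C (enat n)\<bar>) \<longlonglongrightarrow> \<bar>lim ?d - dWL \<delta> mX \<nu>X mY \<nu>Y C \<infinity>\<bar>"
      using dWL_eps_fin_convergent[OF assms(1-3)] dWL_enat_tendsto_infinity[of \<delta> C, OF assms(2-4)]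
      by (intro tendsto_intros) (simp_all add: convergent_LIMSEQ_iff)
    then have "\<bar>lim ?d - dWL \<delta> mX \<nu>X mY \<nu>Y C \<infinity>\<bar> \<le> ?B"
      using dWL_eps_fin_regularization_error[OF assms(1-3)] dWL_fin
      by (intro LIMSEQ_le_const2) auto
    then show ?thesis
      using infinity by (simp add: dWL_eps_def)
  qed
qed

end

theorem theorem21:
  fixes mX :: "'x::finite \<Rightarrow> 'x \<Rightarrow> real" and \<nu>X :: "'x \<Rightarrow> real"
    and mY :: "'y::finite \<Rightarrow> 'y \<Rightarrow> real" and \<nu>Y :: "'y \<Rightarrow> real"
    and C :: "'x \<Rightarrow> 'y \<Rightarrow> real" and \<delta> :: real and k :: enat
  assumes "markov_kernel mX" and "prob_vec \<nu>X"
    and "markov_kernel mY" and "prob_vec \<nu>Y"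
    and "\<forall>x y. 0 \<le> C x y"
    and "0 < \<delta>" and "\<delta> \<le> 1"
  shows "((\<lambda>\<epsilon>. dWL_eps \<epsilon> \<delta> mX \<nu>X mY \<nu>Y C k) \<longlongrightarrow> dWL \<delta> mX \<nu>X mY \<nu>Y C k) (at_right 0)"
proof -
  interpret markov_chain_pair mX \<nu>X mY \<nu>Y
    using assms(1-4) by unfold_locales
  let ?N = "real CARD('x) * real CARD('y)"
  have "\<forall>\<^sub>F \<epsilon> in at_right 0.
      norm (dWL_eps \<epsilon> \<delta> mX \<nu>X mY \<nu>Y C k - dWL \<delta> mX \<nu>X mY \<nu>Y C k) \<le> \<epsilon> * (?N / \<delta> + ?N)"
    using eventually_at_right_less[of "0::real"]
  proof eventually_elim
    case (elim \<epsilon>)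
    then show ?case
      using dWL_eps_regularization_error[of \<epsilon> \<delta> C k] assms(5-7) by (simp add: distrib_left)
  qed
  moreover have "((\<lambda>\<epsilon>. \<epsilon> * (?N / \<delta> + ?N)) \<longlongrightarrow> 0) (at_right 0)"
    by (intro tendsto_mult_left_zero tendsto_ident_at)
  ultimately show ?thesis
    by (subst LIM_zero_iff[symmetric]) (rule Lim_null_comparison)
qed

end
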